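(* Let $k=0$ and let $a$ be a regular scale factor (extended evenly to negative arguments). Then $g_{\theta\theta}(\tau,\rho)$ and $g_{\phi\phi}(\tau,\rho,\theta)$ are continuous on $D_{\mathrm{polar}}$, where at points with $\rho=\rho_{\mathcal M_\tau}$ (i.e. $t_0(\tau,\rho)=0$) their values are defined as the limits as $t_0\to0$ (these limits exist).
   Context: A function $a:[0,\infty)\to[0,\infty)$ is a regular scale factor if: (a) $a(0)=0$; (b) $a$ is increasing and continuous on $[0,\infty)$, twice continuously differentiable on $(0,\infty)$, with an inverse function on $[0,\infty)$; (c) $\frac{a(t)\ddot a(t)}{\dot a(t)^2}\le1$ for all $t>0$ (presupposing $\dot a(t)\ne0$). Extend $a$ by $a(-t)=a(t)$. For $0<s<\tau$, $\chi_s(\tau)=\int_s^\tau\frac{1}{a(t)}\frac{a(\tau)}{\sqrt{a^2(\tau)-a^2(t)}}dt$. For $\tau>0$, $\rho_{\mathcal M_\tau}=\int_0^\tau\frac{a(t)}{\sqrt{a^2(\tau)-a^2(t)}}dt$; for $0<\rho<2\rho_{\mathcal M_\tau}$, $t_0(\tau,\rho)$ is the unique $t_0\in(-\tau,\tau)$ with $\rho=\int_{t_0}^\tau\frac{a(t)}{\sqrt{a^2(\tau)-a^2(t)}}dt$. Define $f(\tau,t_0)=\int_{t_0}^{\tau}\frac{\ddot a(t)}{\dot a(t)^2}\left(\frac{\sqrt{a^2(\tau)-a^2(t_0)}}{\sqrt{a^2(\tau)-a^2(t)}}-1\right)dt$ for $0\le t_0<\tau$, $f(\tau,t_0)=2f(\tau,0)-f(\tau,-t_0)$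 for $-\tau<t_0<0$, and $g_{\tau\tau}(\tau,\rho)=-[1-\dot a(\tau)f(\tau,t_0(\tau,\rho))]^2$. Let $\rho_{\max}(\tau)=\inf\{\rho\in(0,2\rho_{\mathcal M_\tau}):g_{\tau\tau}(\tau,\rho)=0\}$ if this set is nonempty, else $2\rho_{\mathcal M_\tau}$. $D_{\mathrm{polar}}=\{(\tau,\rho,\theta,\phi):\tau>0,\ 0<\rho<\rho_{\max}(\tau),\ \theta\in I_\pi,\ \phi\in I_{2\pi}\}$, with $I_\pi,I_{2\pi}$ open intervals of lengths $\pi,2\pi$. For $t_0=t_0(\tau,\rho)\ne0$ and $k=0$: $g_{\theta\theta}(\tau,\rho)=a^2(t_0)\chi_{|t_0|}(\tau)^2$ and $g_{\phi\phi}(\tau,\rho,\theta)=g_{\theta\theta}(\tau,\rho)\sin^2\theta$. *)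

theory Defs
  imports "HOL-Analysis.Analysis"
begin

text \<open>The scale factor is a function
  real \<Rightarrow> real of which only the restriction to [0,\<infinity>) matters; its even extension
  is used below as \<open>a \<bar>t\<bar>\<close>.  Derivatives are \<open>deriv a\<close> and \<open>deriv (deriv a)\<close>.\<close>
definition regular_scale_factor :: "(real \<Rightarrow> real) \<Rightarrow> bool" where
  "regular_scale_factor a \<longleftrightarrow>
     a 0 = 0 \<and>
     strict_mono_on {0..} a \<and>
     continuous_on {0..} a \<and>
     bij_betw a {0..} {0..} \<and>
     (\<forall>t>0. (a has_real_derivative deriv a t) (at t)) \<and>
     (\<forall>t>0. (deriv a has_real_derivative deriv (deriv a) t) (at t)) \<and>
     continuous_on {0<..} (deriv (deriv a)) \<and>
     (\<forall>t>0. deriv a t \<noteq> 0 \<and> a t * deriv (deriv a) t / (deriv a t)\<^sup>2 \<le> 1)"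

definition aext :: "(real \<Rightarrow> real) \<Rightarrow> real \<Rightarrow> real" where
  "aext a t = a \<bar>t\<bar>"

text \<open>\<open>\<chi>_s(\<tau>)\<close> for \<open>0 < s < \<tau>\<close> (improper integral, Henstock--Kurzweil).\<close>
definition chi :: "(real \<Rightarrow> real) \<Rightarrow> real \<Rightarrow> real \<Rightarrow> real" where
  "chi a s \<tau> = integral {s..\<tau>}
     (\<lambda>t. (1 / a t) * (a \<tau> / sqrt ((a \<tau>)\<^sup>2 - (a t)\<^sup>2)))"

definition rho_M :: "(real \<Rightarrow> real) \<Rightarrow> real \<Rightarrow> real" where
  "rho_M a \<tau> = integral {0..\<tau>} (\<lambda>t. a t / sqrt ((a \<tau>)\<^sup>2 - (a t)\<^sup>2))"

definition t0 :: "(real \<Rightarrow> real) \<Rightarrow> real \<Rightarrow> real \<Rightarrow> real" where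
  "t0 a \<tau> \<rho> = (THE s. s \<in> {-\<tau><..<\<tau>} \<and>
      \<rho> = integral {s..\<tau>} (\<lambda>t. aext a t / sqrt ((aext a \<tau>)\<^sup>2 - (aext a t)\<^sup>2)))"

definition f_pos :: "(real \<Rightarrow> real) \<Rightarrow> real \<Rightarrow> real \<Rightarrow> real" where
  "f_pos a \<tau> s = integral {s..\<tau>}
     (\<lambda>t. deriv (deriv a) t / (deriv a t)\<^sup>2 *
          (sqrt ((a \<tau>)\<^sup>2 - (a s)\<^sup>2) / sqrt ((a \<tau>)\<^sup>2 - (a t)\<^sup>2) - 1))"

definition f_fun :: "(real \<Rightarrow> real) \<Rightarrow> real \<Rightarrow> real \<Rightarrow> real" where
  "f_fun a \<tau> s = (if 0 \<le> s then f_pos a \<tau> s else 2 * f_pos a \<tau> 0 - f_pos a \<tau> (- s))"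

definition g_tautau :: "(real \<Rightarrow> real) \<Rightarrow> real \<Rightarrow> real \<Rightarrow> real" where
  "g_tautau a \<tau> \<rho> = - (1 - deriv a \<tau> * f_fun a \<tau> (t0 a \<tau> \<rho>))\<^sup>2"

definition rho_max :: "(real \<Rightarrow> real) \<Rightarrow> real \<Rightarrow> real" where
  "rho_max a \<tau> =
     (let S = {\<rho>. 0 < \<rho> \<and> \<rho> < 2 * rho_M a \<tau> \<and> g_tautau a \<tau> \<rho> = 0}
      in if S \<noteq> {} then Inf S else 2 * rho_M a \<tau>)"

definition D_polar :: "(real \<Rightarrow> real) \<Rightarrow> real \<Rightarrow> real \<Rightarrow> (real \<times> real \<times> real \<times> real) set" where
  "D_polar a c d = {(\<tau>, \<rho>, \<theta>, \<phi>). 0 < \<tau> \<and> 0 < \<rho> \<and> \<rho> < rho_max a \<tau> \<and>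
       \<theta> \<in> {c<..<c + pi} \<and> \<phi> \<in> {d<..<d + 2 * pi}}"

definition gthth_raw :: "(real \<Rightarrow> real) \<Rightarrow> real \<Rightarrow> real \<Rightarrow> real" where
  "gthth_raw a \<tau> s = (aext a s)\<^sup>2 * (chi a \<bar>s\<bar> \<tau>)\<^sup>2"

definition g_thth :: "(real \<Rightarrow> real) \<Rightarrow> real \<Rightarrow> real \<Rightarrow> real" where
  "g_thth a \<tau> \<rho> = (let s = t0 a \<tau> \<rho> in
      if s \<noteq> 0 then gthth_raw a \<tau> s else Lim (at 0) (gthth_raw a \<tau>))"

definition g_phph :: "(real \<Rightarrow> real) \<Rightarrow> real \<Rightarrow> real \<Rightarrow> real \<Rightarrow> real" where
  "g_phph a \<tau> \<rho> \<theta> = g_thth a \<tau> \<rho> * (sin \<theta>)\<^sup>2"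

end

theory Submission
  imports Defs
begin

text \<open>
  The integrals defining \<open>\<rho>\<close> and \<open>\<chi>\<close> are improper at \<open>t = \<tau>\<close>, but integrating by parts
  against \<open>d/dt \<surd>(a(\<tau>)\<^sup>2 - a(t)\<^sup>2) = -a(t) a'(t) / \<surd>(a(\<tau>)\<^sup>2 - a(t)\<^sup>2)\<close> turns them into a boundary
  term plus a proper integral of a continuous function, so they depend continuously on both
  endpoints.  Consequently \<open>\<rho>(\<tau>, t\<^sub>0)\<close> is continuous in \<open>\<tau>\<close> and strictly decreasing in \<open>t\<^sub>0\<close>,
  which makes its inverse \<open>t\<^sub>0(\<tau>, \<rho>)\<close> continuous, and \<open>(\<tau>, s) \<mapsto> a(s)\<^sup>2 \<chi>_{|s|}(\<tau>)\<^sup>2\<close> is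
  continuous for \<open>s \<noteq> 0\<close>.  At \<open>s = 0\<close> it tends to \<open>0\<close>: splitting
  \<open>\<chi>_u(\<tau>) \<le> C \<integral>_u^m 1/a + \<chi>_m(\<tau>)\<close>, monotonicity of \<open>a\<close> gives \<open>a(u) \<integral>_u^m 1/a \<rightarrow> 0\<close>.
\<close>

lemma tendsto_integral_moving_bounds:
  fixes K :: "'a::topological_space \<Rightarrow> real \<Rightarrow> real"
  assumes cont: "continuous_on (U \<times> {c..d}) (\<lambda>(x, t). K x t)"
    and bounds: "x0 \<in> U" "c < y0" "y0 < z0" "z0 < d"
    and X: "(X \<longlongrightarrow> x0) F" "eventually (\<lambda>p. X p \<in> U) F"
    and Y: "(Y \<longlongrightarrow> y0) F" and Z: "(Z \<longlongrightarrow> z0) F"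
  shows "((\<lambda>p. integral {Y p..Z p} (K (X p))) \<longlongrightarrow> integral {y0..z0} (K x0)) F"
proof -
  have cont_K: "continuous_on {u..v} (K x)" if "x \<in> U" "c \<le> u" "v \<le> d" for x u v
    by (rule continuous_on_compose2[OF cont, of "{u..v}" "\<lambda>t. (x, t)", simplified])
      (use that in \<open>auto intro!: continuous_intros\<close>)
  have int_K: "K x integrable_on {u..v}" if "x \<in> U" "c \<le> u" "v \<le> d" for x u v
    using integrable_continuous_interval[OF cont_K[OF that]] .
  define \<Phi> where "\<Phi> u = integral {c..u} (K x0)" for u
  have "continuous_on {c..d} \<Phi>"
    unfolding \<Phi>_def by (rule indefinite_integral_continuous_1) (use int_K bounds in auto)
  moreover have ev_bounds: "eventually (\<lambda>p. c < Y p \<and> Y p < Z p \<and> Z p < d) F"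
  proof -
    have mid: "y0 < (y0 + z0) / 2" "(y0 + z0) / 2 < z0" using bounds by auto
    show ?thesis
      using order_tendstoD(1)[OF Y bounds(2)] order_tendstoD(2)[OF Y mid(1)]
        order_tendstoD(1)[OF Z mid(2)] order_tendstoD(2)[OF Z bounds(4)]
      by eventually_elim auto
  qed
  ultimately have \<Phi>_YZ: "((\<lambda>p. \<Phi> (Z p) - \<Phi> (Y p)) \<longlongrightarrow> \<Phi> z0 - \<Phi> y0) F"
    using bounds by (intro tendsto_diff continuous_on_tendsto_compose[OF _ Z] continuous_on_tendsto_compose[OF _ Y])
      (auto elim: eventually_mono)
  have small: "((\<lambda>p. integral {Y p..Z p} (\<lambda>t. K (X p) t - K x0 t)) \<longlongrightarrow> 0) F"
  proof (rule tendstoI)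
    fix e :: real assume "0 < e"
    then obtain X0 where X0: "x0 \<in> X0" "open X0"
      "\<forall>x\<in>X0 \<inter> U. \<forall>t\<in>{c..d}. dist (K x t) (K x0 t) \<le> e / (2 * (d - c))"
      using continuous_on_prod_compactE[OF cont compact_Icc bounds(1), of "e / (2 * (d - c))"] bounds
      by auto
    show "eventually (\<lambda>p. dist (integral {Y p..Z p} (\<lambda>t. K (X p) t - K x0 t)) 0 < e) F"
      using topological_tendstoD[OF X(1) X0(2,1)] X(2) ev_bounds
    proof eventually_elim
      case (elim p)
      have "norm (integral {Y p..Z p} (\<lambda>t. K (X p) t - K x0 t)) \<le> e / (2 * (d - c)) * (Z p - Y p)"
        using elim X0(3) bounds
        by (intro integral_bound continuous_on_diff cont_K) (auto simp: dist_norm)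
      also have "\<dots> \<le> e / (2 * (d - c)) * (d - c)"
        using elim \<open>0 < e\<close> bounds by (intro mult_left_mono) auto
      also have "\<dots> < e" using \<open>0 < e\<close> bounds by (simp add: field_simps)
      finally show ?case by (simp add: dist_norm)
    qed
  qed
  have "eventually (\<lambda>p. integral {Y p..Z p} (\<lambda>t. K (X p) t - K x0 t) + (\<Phi> (Z p) - \<Phi> (Y p))
      = integral {Y p..Z p} (K (X p))) F"
    using X(2) ev_bounds
  proof eventually_elim
    case (elim p)
    then have "\<Phi> (Z p) - \<Phi> (Y p) = integral {Y p..Z p} (K x0)"
      using Henstock_Kurzweil_Integration.integral_combine[of c "Y p" "Z p" "K x0"] int_K[of x0 c "Z p"] bounds by (simp add: \<Phi>_def)
    then show ?case using elim bounds by (simp add: integral_diff int_K)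
  qed
  moreover have "\<Phi> z0 - \<Phi> y0 = integral {y0..z0} (K x0)"
    using Henstock_Kurzweil_Integration.integral_combine[of c y0 z0 "K x0"] int_K[of x0 c z0] bounds by (simp add: \<Phi>_def)
  ultimately show ?thesis
    using tendsto_add[OF small \<Phi>_YZ] by (auto elim: tendsto_cong[THEN iffD1, rotated])
qed

lemma rho_max_le: "rho_max a \<tau> \<le> 2 * rho_M a \<tau>"
proof (cases "{\<rho>. 0 < \<rho> \<and> \<rho> < 2 * rho_M a \<tau> \<and> g_tautau a \<tau> \<rho> = 0} = {}")
  case False
  then obtain \<rho> where "0 < \<rho>" "\<rho> < 2 * rho_M a \<tau>" "g_tautau a \<tau> \<rho> = 0" by auto
  then have "Inf {\<rho>. 0 < \<rho> \<and> \<rho> < 2 * rho_M a \<tau> \<and> g_tautau a \<tau> \<rho> = 0} \<le> \<rho>"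
    by (intro cInf_lower bdd_belowI[of _ 0]) auto
  with False \<open>\<rho> < 2 * rho_M a \<tau>\<close> show ?thesis by (simp add: rho_max_def Let_def)
qed (simp add: rho_max_def Let_def)

locale regular_scale =
  fixes a :: "real \<Rightarrow> real"
  assumes regular: "regular_scale_factor a"
begin

lemma a_zero [simp]: "a 0 = 0"
  using regular by (simp add: regular_scale_factor_def)

lemma a_less: "0 \<le> x \<Longrightarrow> x < y \<Longrightarrow> a x < a y"
  using regular unfolding regular_scale_factor_def
  by (meson atLeast_iff less_eq_real_def order_trans strict_mono_onD)

lemma a_le: "0 \<le> x \<Longrightarrow> x \<le> y \<Longrightarrow> a x \<le> a y"
  using a_less[of x y] by (cases "x = y") auto

lemma a_pos: "0 < t \<Longrightarrow> 0 < a t"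
  using a_less[of 0 t] by simp

lemma a_nonneg: "0 \<le> t \<Longrightarrow> 0 \<le> a t"
  using a_le[of 0 t] by simp

lemma a_sq_diff_pos: "0 \<le> t \<Longrightarrow> t < \<tau> \<Longrightarrow> 0 < (a \<tau>)\<^sup>2 - (a t)\<^sup>2"
  using a_less[of t \<tau>] a_nonneg[of t] by (simp add: power_strict_mono)

lemma has_real_derivative_a: "0 < t \<Longrightarrow> (a has_real_derivative deriv a t) (at t)"
  using regular by (simp add: regular_scale_factor_def)

lemma has_real_derivative_deriv_a:
  "0 < t \<Longrightarrow> (deriv a has_real_derivative deriv (deriv a) t) (at t)"
  using regular by (simp add: regular_scale_factor_def)

lemma deriv_a_nonzero: "0 < t \<Longrightarrow> deriv a t \<noteq> 0"
  using regular by (simp add: regular_scale_factor_def)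

lemma continuous_on_deriv2_a: "continuous_on {0<..} (deriv (deriv a))"
  using regular by (simp add: regular_scale_factor_def)

lemma continuous_on_deriv_a: "continuous_on {0<..} (deriv a)"
  by (intro continuous_at_imp_continuous_on ballI) (auto intro: DERIV_isCont[OF has_real_derivative_deriv_a])

lemma isCont_a: "0 < t \<Longrightarrow> isCont a t"
  using has_real_derivative_a DERIV_isCont by blast

lemma continuous_on_a: "continuous_on {0<..} a"
  by (intro continuous_at_imp_continuous_on ballI) (auto intro: isCont_a)

lemma isCont_a_abs: "isCont (\<lambda>t. a \<bar>t\<bar>) t"
proof -
  have "continuous_on {0..} a" using regular by (simp add: regular_scale_factor_def)
  then have "continuous_on UNIV (\<lambda>t. a \<bar>t\<bar>)"
    by (rule continuous_on_compose2) (auto intro!: continuous_intros)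
  then show ?thesis by (simp add: continuous_on_eq_continuous_at)
qed

section \<open>Integrals with an inverse square-root singularity\<close>

definition singular_integrand :: "(real \<Rightarrow> real) \<Rightarrow> real \<Rightarrow> real \<Rightarrow> real" where
  "singular_integrand w \<tau> t = w t * a t * deriv a t / sqrt ((a \<tau>)\<^sup>2 - (a t)\<^sup>2)"

text \<open>The integrand is singular at \<open>t = \<tau>\<close>, but \<open>-w(t) \<surd>(a(\<tau>)\<^sup>2 - a(t)\<^sup>2)\<close> is a primitive of
  it up to the continuous term \<open>w'(t) \<surd>(a(\<tau>)\<^sup>2 - a(t)\<^sup>2)\<close>, and it vanishes at \<open>t = \<tau>\<close>.\<close>
lemma has_integral_singular_integrand:
  assumes w: "\<And>t. 0 < t \<Longrightarrow> (w has_real_derivative w' t) (at t)"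
    and w': "continuous_on {0<..} w'"
    and s: "0 < s" "s \<le> \<tau>"
  shows "(singular_integrand w \<tau> has_integral
      w s * sqrt ((a \<tau>)\<^sup>2 - (a s)\<^sup>2) + integral {s..\<tau>} (\<lambda>t. w' t * sqrt ((a \<tau>)\<^sup>2 - (a t)\<^sup>2))) {s..\<tau>}"
proof -
  define P where "P t = - (w t * sqrt ((a \<tau>)\<^sup>2 - (a t)\<^sup>2))" for t
  define q where "q t = w' t * sqrt ((a \<tau>)\<^sup>2 - (a t)\<^sup>2)" for t
  have "continuous_on {s..\<tau>} P"
    unfolding P_def using s
    by (intro continuous_at_imp_continuous_on ballI)
      (auto intro!: continuous_intros DERIV_isCont[OF w] isCont_a)
  moreover have "(P has_vector_derivative singular_integrand w \<tau> t - q t) (at t)"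
    if t: "t \<in> {s<..<\<tau>}" for t
  proof -
    have "0 < t" using t s by auto
    have pos: "0 < (a \<tau>)\<^sup>2 - (a t)\<^sup>2" using t s by (intro a_sq_diff_pos) auto
    have "((\<lambda>x. sqrt ((a \<tau>)\<^sup>2 - (a x)\<^sup>2)) has_real_derivative
        - a t * deriv a t / sqrt ((a \<tau>)\<^sup>2 - (a t)\<^sup>2)) (at t)"
      using pos
      by (auto intro!: derivative_eq_intros has_real_derivative_a[OF \<open>0 < t\<close>] simp: field_simps)
    from DERIV_minus[OF DERIV_mult[OF w[OF \<open>0 < t\<close>] this]]
    have "(P has_real_derivative singular_integrand w \<tau> t - q t) (at t)"
      unfolding P_def singular_integrand_def q_def by (rule DERIV_cong) (use pos in \<open>simp add: field_simps\<close>)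
    then show ?thesis by (simp add: has_real_derivative_iff_has_vector_derivative)
  qed
  ultimately have "((\<lambda>t. singular_integrand w \<tau> t - q t) has_integral P \<tau> - P s) {s..\<tau>}"
    by (rule fundamental_theorem_of_calculus_interior[OF s(2)])
  moreover have "continuous_on {s..\<tau>} q"
    unfolding q_def using s
    by (intro continuous_intros continuous_on_subset[OF w'] continuous_on_subset[OF continuous_on_a]) auto
  ultimately have "((\<lambda>t. singular_integrand w \<tau> t - q t + q t) has_integral P \<tau> - P s + integral {s..\<tau>} q) {s..\<tau>}"
    by (intro has_integral_add integrable_integral integrable_continuous_interval)
  then show ?thesis by (simp add: P_def q_def[abs_def])
qed

lemma tendsto_integral_singular_integrand:
  assumes w: "\<And>t. 0 < t \<Longrightarrow> (w has_real_derivative w' t) (at t)"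
    and w': "continuous_on {0<..} w'"
    and st: "0 < s0" "s0 < \<tau>0"
    and S: "(S \<longlongrightarrow> s0) F" and T: "(T \<longlongrightarrow> \<tau>0) F"
  shows "((\<lambda>p. integral {S p..T p} (singular_integrand w (T p)))
    \<longlongrightarrow> integral {s0..\<tau>0} (singular_integrand w \<tau>0)) F"
proof -
  define K where "K \<tau> t = w' t * sqrt ((a \<tau>)\<^sup>2 - (a t)\<^sup>2)" for \<tau> t
  define B where "B s \<tau> = w s * sqrt ((a \<tau>)\<^sup>2 - (a s)\<^sup>2)" for s \<tau>
  have by_parts: "integral {s..\<tau>} (singular_integrand w \<tau>) = B s \<tau> + integral {s..\<tau>} (K \<tau>)"
    if "0 < s" "s \<le> \<tau>" for s \<tau>
    using integral_unique[OF has_integral_singular_integrand[OF w w' that]]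
    by (simp add: B_def K_def[abs_def])
  have "continuous_on ({0<..} \<times> {s0/2..2*\<tau>0}) (\<lambda>p. w' (snd p) * sqrt ((a (fst p))\<^sup>2 - (a (snd p))\<^sup>2))"
    using st by (intro continuous_intros continuous_on_compose2[OF w'] continuous_on_compose2[OF continuous_on_a])
      auto
  then have K: "continuous_on ({0<..} \<times> {s0/2..2*\<tau>0}) (\<lambda>(\<tau>, t). K \<tau> t)"
    by (simp add: K_def case_prod_beta)
  have "eventually (\<lambda>p. T p \<in> {0<..}) F"
    using order_tendstoD(1)[OF T, of 0] st by simp
  then have lim_K: "((\<lambda>p. integral {S p..T p} (K (T p))) \<longlongrightarrow> integral {s0..\<tau>0} (K \<tau>0)) F"
    using st by (intro tendsto_integral_moving_bounds[OF K _ _ _ _ T _ S T]) auto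
  have lim_B: "((\<lambda>p. B (S p) (T p)) \<longlongrightarrow> B s0 \<tau>0) F"
    unfolding B_def using st
    by (intro tendsto_intros isCont_tendsto_compose[OF DERIV_isCont[OF w]] isCont_tendsto_compose[OF isCont_a] S T)
      auto
  have "eventually (\<lambda>p. 0 < S p \<and> S p \<le> T p) F"
  proof -
    have "s0 < (s0 + \<tau>0) / 2" "(s0 + \<tau>0) / 2 < \<tau>0" using st by auto
    from order_tendstoD(1)[OF S st(1)] order_tendstoD(2)[OF S this(1)] order_tendstoD(1)[OF T this(2)]
    show ?thesis by eventually_elim auto
  qed
  then have "eventually (\<lambda>p. B (S p) (T p) + integral {S p..T p} (K (T p))
      = integral {S p..T p} (singular_integrand w (T p))) F"
    by eventually_elim (simp add: by_parts)
  with tendsto_add[OF lim_B lim_K] show ?thesis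
    using by_parts[of s0 \<tau>0] st by (simp add: tendsto_cong)
qed

text \<open>With the weights \<open>1/a'\<close> and \<open>1/(a\<^sup>2 a')\<close> the integrands of \<open>\<rho>\<close> and \<open>\<chi>\<close> take the
  form of \<open>singular_integrand\<close>.\<close>
lemma has_real_derivative_inverse_deriv_a:
  "0 < t \<Longrightarrow> ((\<lambda>t. 1 / deriv a t) has_real_derivative - deriv (deriv a) t / (deriv a t)\<^sup>2) (at t)"
  using deriv_a_nonzero[of t]
  by (auto intro!: derivative_eq_intros has_real_derivative_deriv_a simp: field_simps power2_eq_square)

lemma continuous_on_deriv_inverse_deriv_a:
  "continuous_on {0<..} (\<lambda>t. - deriv (deriv a) t / (deriv a t)\<^sup>2)"
  using deriv_a_nonzero by (auto intro!: continuous_intros continuous_on_deriv2_a continuous_on_deriv_a)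

lemma has_real_derivative_chi_weight:
  "0 < t \<Longrightarrow> ((\<lambda>t. 1 / ((a t)\<^sup>2 * deriv a t)) has_real_derivative
    - (2 * a t * (deriv a t)\<^sup>2 + (a t)\<^sup>2 * deriv (deriv a) t) / ((a t)\<^sup>2 * deriv a t)\<^sup>2) (at t)"
  using deriv_a_nonzero[of t] a_pos[of t]
  by (auto intro!: derivative_eq_intros has_real_derivative_deriv_a has_real_derivative_a
      simp: field_simps power2_eq_square)

lemma continuous_on_deriv_chi_weight:
  "continuous_on {0<..}
    (\<lambda>t. - (2 * a t * (deriv a t)\<^sup>2 + (a t)\<^sup>2 * deriv (deriv a) t) / ((a t)\<^sup>2 * deriv a t)\<^sup>2)"
  using deriv_a_nonzero a_pos
  by (auto intro!: continuous_intros continuous_on_deriv2_a continuous_on_deriv_a continuous_on_a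
      simp: less_imp_neq[symmetric])

section \<open>The coordinate \<open>\<rho>\<close> as a function of \<open>t\<^sub>0\<close>\<close>

definition rho_integrand :: "real \<Rightarrow> real \<Rightarrow> real" where
  "rho_integrand \<tau> t = aext a t / sqrt ((aext a \<tau>)\<^sup>2 - (aext a t)\<^sup>2)"

text \<open>\<open>rho_of \<tau> t\<^sub>0\<close> is the paper's \<open>\<rho>\<close> as a function of \<open>t\<^sub>0\<close>; \<open>t0 a \<tau>\<close> is its inverse.\<close>
definition rho_of :: "real \<Rightarrow> real \<Rightarrow> real" where
  "rho_of \<tau> s = integral {s..\<tau>} (rho_integrand \<tau>)"

lemma rho_integrand_minus [simp]: "rho_integrand \<tau> (- t) = rho_integrand \<tau> t"
  by (simp add: rho_integrand_def aext_def)

lemma rho_integrand_nonneg: "\<bar>t\<bar> \<le> \<tau> \<Longrightarrow> 0 \<le> rho_integrand \<tau> t"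
  using a_le[of "\<bar>t\<bar>" \<tau>] a_nonneg[of "\<bar>t\<bar>"]
  by (auto simp: rho_integrand_def aext_def power_mono)

lemma rho_integrand_pos: "t \<noteq> 0 \<Longrightarrow> \<bar>t\<bar> < \<tau> \<Longrightarrow> 0 < rho_integrand \<tau> t"
  using a_sq_diff_pos[of "\<bar>t\<bar>" \<tau>] a_pos[of "\<bar>t\<bar>"] by (simp add: rho_integrand_def aext_def)

lemma rho_integrand_eq_singular_integrand:
  "0 < t \<Longrightarrow> 0 < \<tau> \<Longrightarrow> rho_integrand \<tau> t = singular_integrand (\<lambda>t. 1 / deriv a t) \<tau> t"
  using deriv_a_nonzero[of t] by (simp add: rho_integrand_def singular_integrand_def aext_def)

lemma continuous_on_rho_integrand:
  assumes "0 \<le> m"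
  shows "continuous_on ({m<..} \<times> {-m..m}) (\<lambda>(\<tau>, t). rho_integrand \<tau> t)"
proof -
  have "sqrt ((a \<bar>fst p\<bar>)\<^sup>2 - (a \<bar>snd p\<bar>)\<^sup>2) \<noteq> 0" if "p \<in> {m<..} \<times> {-m..m}" for p
  proof -
    have "\<bar>snd p\<bar> < \<bar>fst p\<bar>" using that assms by (auto simp: abs_le_iff)
    then show ?thesis using a_sq_diff_pos[of "\<bar>snd p\<bar>" "\<bar>fst p\<bar>"] by simp
  qed
  then show ?thesis
    unfolding rho_integrand_def aext_def case_prod_beta
    by (intro continuous_intros continuous_at_imp_continuous_on ballI
        isCont_o2[OF _ isCont_a_abs, unfolded o_def]) auto
qed

lemma continuous_on_rho_integrand_at:
  "0 \<le> m \<Longrightarrow> m < \<tau> \<Longrightarrow> continuous_on {-m..m} (rho_integrand \<tau>)"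
  by (rule continuous_on_compose2[OF continuous_on_rho_integrand[of m], of "{-m..m}" "\<lambda>t. (\<tau>, t)",
        simplified]) (auto intro!: continuous_intros)

lemma integrable_rho_integrand:
  assumes "0 < \<tau>"
  shows "rho_integrand \<tau> integrable_on {-\<tau>..\<tau>}"
proof -
  have "rho_integrand \<tau> integrable_on {-(\<tau>/2)..\<tau>/2}"
    using continuous_on_rho_integrand_at[of "\<tau>/2" \<tau>] assms integrable_continuous_interval by auto
  then have middle: "rho_integrand \<tau> integrable_on {0..\<tau>/2}"
    by (rule integrable_subinterval_real) (use assms in auto)
  have "singular_integrand (\<lambda>t. 1 / deriv a t) \<tau> integrable_on {\<tau>/2..\<tau>}"
    using assms by (intro has_integral_integrable[OF has_integral_singular_integrand[OF
          has_real_derivative_inverse_deriv_a continuous_on_deriv_inverse_deriv_a]]) auto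
  then have tail: "rho_integrand \<tau> integrable_on {\<tau>/2..\<tau>}"
    by (rule integrable_spike_finite[of "{}", rotated 2])
      (use assms in \<open>auto simp: rho_integrand_eq_singular_integrand\<close>)
  have right: "rho_integrand \<tau> integrable_on {0..\<tau>}"
    by (rule Henstock_Kurzweil_Integration.integrable_combine[OF _ _ middle tail]) (use assms in auto)
  then have "(\<lambda>t. rho_integrand \<tau> (- t)) integrable_on {-\<tau>..-0}"
    by (rule Henstock_Kurzweil_Integration.integrable_reflect_real[THEN iffD2])
  then have left: "rho_integrand \<tau> integrable_on {-\<tau>..0}" by simp
  show ?thesis
    by (rule Henstock_Kurzweil_Integration.integrable_combine[OF _ _ left right]) (use assms in auto)
qed

lemma integrable_rho_integrand_sub:
  "0 < \<tau> \<Longrightarrow> -\<tau> \<le> s1 \<Longrightarrow> s2 \<le> \<tau> \<Longrightarrow> rho_integrand \<tau> integrable_on {s1..s2}"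
  by (rule integrable_subinterval_real[OF integrable_rho_integrand]) auto

lemma rho_of_self [simp]: "rho_of \<tau> \<tau> = 0"
  by (simp add: rho_of_def)

lemma rho_of_minus_self:
  assumes "0 < \<tau>"
  shows "rho_of \<tau> (- \<tau>) = 2 * rho_M a \<tau>"
proof -
  have "integral {-\<tau>..0} (rho_integrand \<tau>) = integral {0..\<tau>} (rho_integrand \<tau>)"
    using Henstock_Kurzweil_Integration.integral_reflect_real[of \<tau> 0 "rho_integrand \<tau>"] by (simp only: minus_zero rho_integrand_minus)
  also have "\<dots> = rho_M a \<tau>"
    unfolding rho_M_def using assms by (intro integral_cong) (auto simp: rho_integrand_def aext_def)
  finally show ?thesis
    using Henstock_Kurzweil_Integration.integral_combine[OF _ _ integrable_rho_integrand[OF assms], of 0]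
      assms \<open>integral {0..\<tau>} (rho_integrand \<tau>) = rho_M a \<tau>\<close>
    by (simp add: rho_of_def)
qed

lemma rho_of_split:
  "0 < \<tau> \<Longrightarrow> -\<tau> \<le> s1 \<Longrightarrow> s1 \<le> s2 \<Longrightarrow> s2 \<le> \<tau> \<Longrightarrow>
    rho_of \<tau> s1 = integral {s1..s2} (rho_integrand \<tau>) + rho_of \<tau> s2"
  unfolding rho_of_def
  by (rule Henstock_Kurzweil_Integration.integral_combine[symmetric, OF _ _ integrable_rho_integrand_sub])
    auto

lemma rho_of_strict_antimono:
  assumes "0 < \<tau>" "-\<tau> \<le> s1" "s1 < s2" "s2 \<le> \<tau>"
  shows "rho_of \<tau> s2 < rho_of \<tau> s1"
proof -
  \<comment> \<open>a subinterval avoiding the zero of the integrand at \<open>0\<close> and its singularities at \<open>\<plusminus>\<tau>\<close>\<close>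
  obtain p q where pq: "s1 \<le> p" "p < q" "q \<le> s2" "0 \<notin> {p<..<q}" "\<bar>p\<bar> < \<tau>" "\<bar>q\<bar> < \<tau>"
  proof (cases "0 < s2")
    case True
    then show ?thesis
      by (intro that[of "max s1 0" "(max s1 0 + s2) / 2"]) (use assms in auto)
  next
    case False
    then show ?thesis
      by (intro that[of "(s1 + s2) / 2" s2]) (use assms in auto)
  qed
  have "continuous_on {p..q} (rho_integrand \<tau>)"
    by (rule continuous_on_subset[OF continuous_on_rho_integrand_at[of "max \<bar>p\<bar> \<bar>q\<bar>"]])
      (use pq in auto)
  then have "integral {p..q} (\<lambda>_. 0) < integral {p..q} (rho_integrand \<tau>)"
    using pq by (intro integral_less_real) (auto intro!: rho_integrand_pos)
  also have "\<dots> \<le> integral {s1..s2} (rho_integrand \<tau>)"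
    using pq assms
    by (intro integral_subset_le integrable_rho_integrand_sub ballI rho_integrand_nonneg) auto
  finally show ?thesis
    using rho_of_split[of \<tau> s1 s2] assms by simp
qed

lemma rho_of_less_iff:
  "0 < \<tau> \<Longrightarrow> s1 \<in> {-\<tau>..\<tau>} \<Longrightarrow> s2 \<in> {-\<tau>..\<tau>} \<Longrightarrow> rho_of \<tau> s1 < rho_of \<tau> s2 \<longleftrightarrow> s2 < s1"
  using rho_of_strict_antimono[of \<tau> s1 s2] rho_of_strict_antimono[of \<tau> s2 s1]
  by (cases s1 s2 rule: linorder_cases) auto

lemma continuous_on_rho_of: "0 < \<tau> \<Longrightarrow> continuous_on {-\<tau>..\<tau>} (rho_of \<tau>)"
  unfolding rho_of_def by (rule indefinite_integral_continuous_1'[OF integrable_rho_integrand])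

lemma isCont_rho_of:
  assumes "\<bar>s\<bar> < \<tau>0"
  shows "isCont (\<lambda>\<tau>. rho_of \<tau> s) \<tau>0"
proof -
  define w where "w t = 1 / deriv a t" for t
  define m where "m = (\<bar>s\<bar> + \<tau>0) / 2"
  define m' where "m' = (m + \<tau>0) / 2"
  have m: "\<bar>s\<bar> < m" "m < m'" "m' < \<tau>0" using assms by (auto simp: m_def m'_def)
  have split: "rho_of \<tau> s = integral {s..m} (rho_integrand \<tau>) + integral {m..\<tau>} (singular_integrand w \<tau>)"
    if "m < \<tau>" for \<tau>
  proof -
    have "integral {m..\<tau>} (rho_integrand \<tau>) = integral {m..\<tau>} (singular_integrand w \<tau>)"
      using that m unfolding w_def by (intro integral_cong rho_integrand_eq_singular_integrand) auto
    then show ?thesis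
      using rho_of_split[of \<tau> s m] that m by (simp add: rho_of_def)
  qed
  have "((\<lambda>\<tau>. integral {s..m} (rho_integrand \<tau>)) \<longlongrightarrow> integral {s..m} (rho_integrand \<tau>0)) (at \<tau>0)"
    using m
    by (intro tendsto_integral_moving_bounds[OF continuous_on_rho_integrand[of m']])
      (auto intro: order_tendstoD(1)[OF tendsto_ident_at, of m' \<tau>0])
  moreover have "((\<lambda>\<tau>. integral {m..\<tau>} (singular_integrand w \<tau>))
      \<longlongrightarrow> integral {m..\<tau>0} (singular_integrand w \<tau>0)) (at \<tau>0)"
    using m unfolding w_def
    by (intro tendsto_integral_singular_integrand[OF has_real_derivative_inverse_deriv_a
        continuous_on_deriv_inverse_deriv_a]) auto
  ultimately have "((\<lambda>\<tau>. integral {s..m} (rho_integrand \<tau>) + integral {m..\<tau>} (singular_integrand w \<tau>))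
      \<longlongrightarrow> rho_of \<tau>0 s) (at \<tau>0)"
    using split[of \<tau>0] m by (simp add: tendsto_add)
  moreover have "eventually (\<lambda>\<tau>. m < \<tau>) (at \<tau>0)"
    using m by (intro order_tendstoD(1)[OF tendsto_ident_at]) auto
  then have "eventually (\<lambda>\<tau>. integral {s..m} (rho_integrand \<tau>) + integral {m..\<tau>} (singular_integrand w \<tau>)
      = rho_of \<tau> s) (at \<tau>0)"
    by eventually_elim (simp add: split)
  ultimately show ?thesis
    unfolding isCont_def by (rule tendsto_cong[THEN iffD1, rotated])
qed

lemma t0_eqI:
  assumes "0 < \<tau>" "s \<in> {-\<tau><..<\<tau>}" "rho_of \<tau> s = \<rho>"
  shows "t0 a \<tau> \<rho> = s"
  unfolding t0_def
proof (rule the_equality)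
  show "s \<in> {-\<tau><..<\<tau>} \<and> \<rho> = integral {s..\<tau>} (\<lambda>t. aext a t / sqrt ((aext a \<tau>)\<^sup>2 - (aext a t)\<^sup>2))"
    using assms by (simp add: rho_of_def rho_integrand_def[abs_def])
next
  fix s' assume "s' \<in> {-\<tau><..<\<tau>} \<and> \<rho> = integral {s'..\<tau>} (\<lambda>t. aext a t / sqrt ((aext a \<tau>)\<^sup>2 - (aext a t)\<^sup>2))"
  then have "s' \<in> {-\<tau><..<\<tau>}" "rho_of \<tau> s' = rho_of \<tau> s"
    using assms by (simp_all add: rho_of_def rho_integrand_def[abs_def])
  then show "s' = s"
    using rho_of_less_iff[of \<tau> s s'] rho_of_less_iff[of \<tau> s' s] assms
    by (cases s s' rule: linorder_cases) auto
qed

lemma t0_spec: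
  assumes "0 < \<tau>" "0 < \<rho>" "\<rho> < 2 * rho_M a \<tau>"
  shows "t0 a \<tau> \<rho> \<in> {-\<tau><..<\<tau>}" "rho_of \<tau> (t0 a \<tau> \<rho>) = \<rho>"
proof -
  have "rho_of \<tau> \<tau> \<le> \<rho>" "\<rho> \<le> rho_of \<tau> (- \<tau>)" "- \<tau> \<le> \<tau>"
    using rho_of_minus_self assms by auto
  from IVT2'[OF this continuous_on_rho_of[OF assms(1)]]
  obtain s where s: "s \<in> {-\<tau>..\<tau>}" "rho_of \<tau> s = \<rho>" by auto
  then have "s \<noteq> \<tau>" "s \<noteq> -\<tau>" using rho_of_minus_self assms by auto
  with s have "s \<in> {-\<tau><..<\<tau>}" by auto
  with t0_eqI[OF assms(1) this s(2)] s show "t0 a \<tau> \<rho> \<in> {-\<tau><..<\<tau>}" "rho_of \<tau> (t0 a \<tau> \<rho>) = \<rho>"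
    by auto
qed

lemma continuous_on_t0:
  "continuous_on {(\<tau>, \<rho>). 0 < \<tau> \<and> 0 < \<rho> \<and> \<rho> < 2 * rho_M a \<tau>} (\<lambda>(\<tau>, \<rho>). t0 a \<tau> \<rho>)"
  unfolding continuous_on_def
proof (intro ballI)
  let ?V = "{(\<tau>, \<rho>). 0 < \<tau> \<and> 0 < \<rho> \<and> \<rho> < 2 * rho_M a \<tau>}"
  fix p0 assume "p0 \<in> ?V"
  then obtain \<tau>0 \<rho>0 where p0: "p0 = (\<tau>0, \<rho>0)" "0 < \<tau>0" "0 < \<rho>0" "\<rho>0 < 2 * rho_M a \<tau>0" by auto
  define s0 where "s0 = t0 a \<tau>0 \<rho>0"
  have s0: "\<bar>s0\<bar> < \<tau>0" "rho_of \<tau>0 s0 = \<rho>0" using t0_spec[OF p0(2-4)] by (auto simp: s0_def)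
  let ?F = "at p0 within ?V"
  have fst: "(fst \<longlongrightarrow> \<tau>0) ?F" and snd: "(snd \<longlongrightarrow> \<rho>0) ?F"
    using p0(1) by (auto intro!: tendsto_eq_intros)
  have lim: "((\<lambda>p. rho_of (fst p) s - snd p) \<longlongrightarrow> rho_of \<tau>0 s - \<rho>0) ?F" if "\<bar>s\<bar> < \<tau>0" for s
    by (intro tendsto_diff isCont_tendsto_compose[OF isCont_rho_of[OF that] fst] snd)
  show "((\<lambda>(\<tau>, \<rho>). t0 a \<tau> \<rho>) \<longlongrightarrow> (\<lambda>(\<tau>, \<rho>). t0 a \<tau> \<rho>) p0) ?F"
  proof (rule tendstoI)
    fix e :: real assume "0 < e"
    define r where "r = min e ((\<tau>0 - \<bar>s0\<bar>) / 2)"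
    have "r \<le> (\<tau>0 - \<bar>s0\<bar>) / 2" unfolding r_def by (rule min.cobounded2)
    then have r: "0 < r" "r \<le> e" "\<bar>s0\<bar> + r < \<tau>0" using \<open>0 < e\<close> s0 by (auto simp: r_def)
    then have "\<bar>s0 - r\<bar> < \<tau>0" "\<bar>s0 + r\<bar> < \<tau>0" by auto
    moreover have "\<rho>0 < rho_of \<tau>0 (s0 - r)" "rho_of \<tau>0 (s0 + r) < \<rho>0"
      using s0 r rho_of_less_iff[OF \<open>0 < \<tau>0\<close>, of s0 "s0 - r"] rho_of_less_iff[OF \<open>0 < \<tau>0\<close>, of "s0 + r" s0]
      by auto
    ultimately have "eventually (\<lambda>p. 0 < rho_of (fst p) (s0 - r) - snd p) ?F"
      "eventually (\<lambda>p. rho_of (fst p) (s0 + r) - snd p < 0) ?F"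
      by (intro order_tendstoD[OF lim]; simp)+
    moreover have "eventually (\<lambda>p. \<bar>s0\<bar> + r < fst p) ?F"
      using r by (intro order_tendstoD(1)[OF fst])
    moreover have "eventually (\<lambda>p. p \<in> ?V) ?F"
      by (simp add: eventually_at_filter)
    ultimately show "eventually (\<lambda>p. dist ((\<lambda>(\<tau>, \<rho>). t0 a \<tau> \<rho>) p) ((\<lambda>(\<tau>, \<rho>). t0 a \<tau> \<rho>) p0) < e) ?F"
    proof eventually_elim
      case (elim p)
      then obtain \<tau> \<rho> where p: "p = (\<tau>, \<rho>)" "0 < \<tau>" "0 < \<rho>" "\<rho> < 2 * rho_M a \<tau>" by auto
      define s where "s = t0 a \<tau> \<rho>"
      have s: "s \<in> {-\<tau>..\<tau>}" "rho_of \<tau> s = \<rho>" using t0_spec[OF p(2-4)] by (auto simp: s_def)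
      have "s0 - r \<in> {-\<tau>..\<tau>}" "s0 + r \<in> {-\<tau>..\<tau>}" using elim p r(1) by auto
      then have "s0 - r < s" "s < s0 + r"
        using elim s rho_of_less_iff[OF p(2)] p(1) by auto
      then show ?case using r by (simp add: p(1) s_def[symmetric] s0_def[symmetric] p0(1) dist_real_def)
    qed
  qed
qed

section \<open>The function \<open>\<chi>\<close>\<close>

lemma chi_integrand_eq_singular_integrand:
  "0 < t \<Longrightarrow> 1 / a t * (a \<tau> / sqrt ((a \<tau>)\<^sup>2 - (a t)\<^sup>2))
    = a \<tau> * singular_integrand (\<lambda>t. 1 / ((a t)\<^sup>2 * deriv a t)) \<tau> t"
  using deriv_a_nonzero[of t] a_pos[of t]
  by (simp add: singular_integrand_def field_simps power2_eq_square)

lemma has_integral_chi: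
  assumes "0 < u" "u \<le> \<tau>"
  shows "((\<lambda>t. 1 / a t * (a \<tau> / sqrt ((a \<tau>)\<^sup>2 - (a t)\<^sup>2))) has_integral chi a u \<tau>) {u..\<tau>}"
    and "chi a u \<tau> = a \<tau> * integral {u..\<tau>} (singular_integrand (\<lambda>t. 1 / ((a t)\<^sup>2 * deriv a t)) \<tau>)"
proof -
  have "(singular_integrand (\<lambda>t. 1 / ((a t)\<^sup>2 * deriv a t)) \<tau>) integrable_on {u..\<tau>}"
    using assms by (intro has_integral_integrable[OF has_integral_singular_integrand[OF
          has_real_derivative_chi_weight continuous_on_deriv_chi_weight]]) auto
  then have "((\<lambda>t. a \<tau> * singular_integrand (\<lambda>t. 1 / ((a t)\<^sup>2 * deriv a t)) \<tau> t) has_integral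
      a \<tau> * integral {u..\<tau>} (singular_integrand (\<lambda>t. 1 / ((a t)\<^sup>2 * deriv a t)) \<tau>)) {u..\<tau>}"
    by (intro has_integral_mult_right integrable_integral)
  then have "((\<lambda>t. 1 / a t * (a \<tau> / sqrt ((a \<tau>)\<^sup>2 - (a t)\<^sup>2))) has_integral
      a \<tau> * integral {u..\<tau>} (singular_integrand (\<lambda>t. 1 / ((a t)\<^sup>2 * deriv a t)) \<tau>)) {u..\<tau>}"
    by (rule has_integral_spike_finite[of "{}", rotated 2])
      (simp, rule chi_integrand_eq_singular_integrand, use assms in auto)
  then show "((\<lambda>t. 1 / a t * (a \<tau> / sqrt ((a \<tau>)\<^sup>2 - (a t)\<^sup>2))) has_integral chi a u \<tau>) {u..\<tau>}"
    and "chi a u \<tau> = a \<tau> * integral {u..\<tau>} (singular_integrand (\<lambda>t. 1 / ((a t)\<^sup>2 * deriv a t)) \<tau>)"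
    by (simp_all add: chi_def integral_unique)
qed

lemma chi_nonneg: "0 < u \<Longrightarrow> u \<le> \<tau> \<Longrightarrow> 0 \<le> chi a u \<tau>"
  by (intro has_integral_nonneg[OF has_integral_chi(1)])
    (auto intro!: divide_nonneg_nonneg mult_nonneg_nonneg a_nonneg power_mono a_le)

lemma tendsto_chi:
  assumes "0 < s0" "s0 < \<tau>0" and S: "(S \<longlongrightarrow> s0) F" and T: "(T \<longlongrightarrow> \<tau>0) F"
  shows "((\<lambda>p. chi a (S p) (T p)) \<longlongrightarrow> chi a s0 \<tau>0) F"
proof -
  define w where "w t = 1 / ((a t)\<^sup>2 * deriv a t)" for t
  have "((\<lambda>p. a (T p) * integral {S p..T p} (singular_integrand w (T p)))
      \<longlongrightarrow> a \<tau>0 * integral {s0..\<tau>0} (singular_integrand w \<tau>0)) F"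
    unfolding w_def using assms
    by (intro tendsto_mult isCont_tendsto_compose[OF isCont_a] tendsto_integral_singular_integrand[OF
          has_real_derivative_chi_weight continuous_on_deriv_chi_weight]) auto
  moreover have "eventually (\<lambda>p. 0 < S p \<and> S p \<le> T p) F"
  proof -
    have "s0 < (s0 + \<tau>0) / 2" "(s0 + \<tau>0) / 2 < \<tau>0" using assms by auto
    from order_tendstoD(1)[OF S assms(1)] order_tendstoD(2)[OF S this(1)] order_tendstoD(1)[OF T this(2)]
    show ?thesis by eventually_elim auto
  qed
  ultimately show ?thesis
    using has_integral_chi(2)[of s0 \<tau>0] assms unfolding w_def
    by (auto simp: has_integral_chi(2) elim!: tendsto_cong[THEN iffD1, rotated] eventually_mono)
qed

lemma continuous_on_inverse_a: "0 < u \<Longrightarrow> continuous_on {u..m} (\<lambda>t. 1 / a t)"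
  using a_pos
  by (intro continuous_intros continuous_on_subset[OF continuous_on_a]) (auto simp: less_imp_neq[symmetric])

lemma integrable_inverse_a: "0 < u \<Longrightarrow> (\<lambda>t. 1 / a t) integrable_on {u..m}"
  by (rule integrable_continuous_interval[OF continuous_on_inverse_a])

lemma chi_le:
  assumes "0 < u" "u \<le> m" "m < \<tau>"
  shows "chi a u \<tau> \<le> a \<tau> / sqrt ((a \<tau>)\<^sup>2 - (a m)\<^sup>2) * integral {u..m} (\<lambda>t. 1 / a t) + chi a m \<tau>"
proof -
  define C where "C = a \<tau> / sqrt ((a \<tau>)\<^sup>2 - (a m)\<^sup>2)"
  have split: "chi a u \<tau> = integral {u..m} (\<lambda>t. 1 / a t * (a \<tau> / sqrt ((a \<tau>)\<^sup>2 - (a t)\<^sup>2))) + chi a m \<tau>"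
    using Henstock_Kurzweil_Integration.integral_combine[OF assms(2) _ has_integral_integrable[OF
          has_integral_chi(1)]] assms
    by (simp add: chi_def)
  have "integral {u..m} (\<lambda>t. 1 / a t * (a \<tau> / sqrt ((a \<tau>)\<^sup>2 - (a t)\<^sup>2)))
      \<le> integral {u..m} (\<lambda>t. C * (1 / a t))"
  proof (rule integral_le)
    show "(\<lambda>t. 1 / a t * (a \<tau> / sqrt ((a \<tau>)\<^sup>2 - (a t)\<^sup>2))) integrable_on {u..m}"
      using assms by (intro integrable_subinterval_real[OF has_integral_integrable[OF has_integral_chi(1)]])
        auto
    show "(\<lambda>t. C * (1 / a t)) integrable_on {u..m}"
      using assms by (intro integrable_on_mult_right integrable_inverse_a)
  next
    fix t assume t: "t \<in> {u..m}"
    then have "0 < a t" "a t \<le> a m" using assms a_pos a_le by auto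
    moreover have "0 < (a \<tau>)\<^sup>2 - (a m)\<^sup>2" using assms by (intro a_sq_diff_pos) auto
    ultimately have "sqrt ((a \<tau>)\<^sup>2 - (a m)\<^sup>2) \<le> sqrt ((a \<tau>)\<^sup>2 - (a t)\<^sup>2)" "0 < sqrt ((a \<tau>)\<^sup>2 - (a m)\<^sup>2)"
      by (auto intro: power_mono)
    then show "1 / a t * (a \<tau> / sqrt ((a \<tau>)\<^sup>2 - (a t)\<^sup>2)) \<le> C * (1 / a t)"
      using \<open>0 < a t\<close> a_nonneg[of \<tau>] assms unfolding C_def
      by (simp add: divide_left_mono mult.commute mult_left_mono)
  qed
  also have "\<dots> = C * integral {u..m} (\<lambda>t. 1 / a t)"
    by (rule Henstock_Kurzweil_Integration.integral_mult_right)
  finally show ?thesis using split by (simp add: C_def)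
qed

section \<open>Continuity of \<open>g\<^sub>\<theta>\<^sub>\<theta>\<close> and \<open>g\<^sub>\<phi>\<^sub>\<phi>\<close>\<close>

lemma a_mult_integral_inverse_a_le:
  assumes "0 < u" "u \<le> \<eta>" "\<eta> \<le> m"
  shows "a u * integral {u..m} (\<lambda>t. 1 / a t) \<le> \<eta> + a u * m / a \<eta>"
proof -
  have bound: "integral {v..w} (\<lambda>t. 1 / a t) \<le> 1 / a v * (w - v)" if "0 < v" "v \<le> w" for v w
  proof -
    have "norm (1 / a t) \<le> 1 / a v" if "t \<in> {v..w}" for t
    proof -
      have "0 < a v" "a v \<le> a t" using that \<open>0 < v\<close> a_pos a_le by auto
      then show ?thesis by (simp add: frac_le)
    qed
    then have "norm (integral {v..w} (\<lambda>t. 1 / a t)) \<le> 1 / a v * (w - v)"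
      using that by (intro integral_bound continuous_on_inverse_a)
    then show ?thesis by simp
  qed
  have "integral {u..m} (\<lambda>t. 1 / a t) = integral {u..\<eta>} (\<lambda>t. 1 / a t) + integral {\<eta>..m} (\<lambda>t. 1 / a t)"
    using assms by (intro Henstock_Kurzweil_Integration.integral_combine[symmetric] integrable_inverse_a) auto
  also have "\<dots> \<le> 1 / a u * (\<eta> - u) + 1 / a \<eta> * (m - \<eta>)"
    using assms by (intro add_mono bound) auto
  finally have "a u * integral {u..m} (\<lambda>t. 1 / a t) \<le> a u * (1 / a u * (\<eta> - u) + 1 / a \<eta> * (m - \<eta>))"
    using a_pos[OF assms(1)] by (simp add: mult_left_mono)
  also have "\<dots> = (\<eta> - u) + a u * (m - \<eta>) / a \<eta>"
    using a_pos[OF assms(1)] by (simp add: field_simps)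
  also have "\<dots> \<le> \<eta> + a u * m / a \<eta>"
    using assms a_pos[of u] a_pos[of \<eta>]
    by (intro add_mono divide_right_mono mult_left_mono) auto
  finally show ?thesis .
qed

text \<open>Since \<open>a(u) \<le> a(t)\<close> on \<open>[u, \<eta>]\<close>, the mass near \<open>u\<close> contributes at most \<open>\<eta>\<close>; the rest
  is killed by \<open>a(u) \<rightarrow> 0\<close>.\<close>
lemma continuous_a_mult_integral_inverse_a:
  assumes "0 < m"
  shows "continuous (at 0 within {0..}) (\<lambda>u. a u * integral {u..m} (\<lambda>t. 1 / a t))"
  unfolding continuous_within
proof (rule tendstoI)
  fix e :: real assume "0 < e"
  define \<eta> where "\<eta> = min (e / 2) m"
  have \<eta>: "0 < \<eta>" "\<eta> \<le> e / 2" "\<eta> \<le> m" using \<open>0 < e\<close> assms by (auto simp: \<eta>_def)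
  have "continuous_on {0..} a" using regular by (simp add: regular_scale_factor_def)
  then have "(a \<longlongrightarrow> a 0) (at 0 within {0..})"
    unfolding continuous_on_def by (metis atLeast_iff order_refl)
  moreover have "0 < e * a \<eta> / (2 * m)" using \<open>0 < e\<close> assms a_pos[OF \<eta>(1)] by simp
  ultimately have "eventually (\<lambda>u. a u < e * a \<eta> / (2 * m)) (at 0 within {0..})"
    by (intro order_tendstoD(2)) simp_all
  moreover have "eventually (\<lambda>u. u < \<eta>) (at 0 within {0..})"
    using \<eta>(1) by (intro order_tendstoD(2)[OF tendsto_ident_at])
  moreover have "eventually (\<lambda>u. u \<in> {0..}) (at (0::real) within {0..})"
    by (simp add: eventually_at_filter)
  ultimately show "eventually (\<lambda>u. dist (a u * integral {u..m} (\<lambda>t. 1 / a t))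
      (a 0 * integral {0..m} (\<lambda>t. 1 / a t)) < e) (at 0 within {0..})"
  proof eventually_elim
    case (elim u)
    show ?case
    proof (cases "u = 0")
      case False
      with elim have u: "0 < u" "u \<le> \<eta>" by auto
      have "0 \<le> integral {u..m} (\<lambda>t. 1 / a t)"
        using u by (intro integral_nonneg integrable_inverse_a) (auto intro: a_nonneg)
      then have "0 \<le> a u * integral {u..m} (\<lambda>t. 1 / a t)" using a_pos[OF u(1)] by simp
      moreover have "a u * m / a \<eta> < e / 2"
        using elim assms a_pos[OF \<eta>(1)] by (simp add: field_simps)
      moreover have "a u * integral {u..m} (\<lambda>t. 1 / a t) < e"
        using a_mult_integral_inverse_a_le[OF u \<eta>(3)] \<eta>(2) \<open>a u * m / a \<eta> < e / 2\<close> by linarith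
      ultimately show ?thesis by (simp add: dist_real_def)
    qed (use \<open>0 < e\<close> in simp)
  qed
qed

definition gthth_ext :: "real \<Rightarrow> real \<Rightarrow> real" where
  "gthth_ext \<tau> s = (if s = 0 then 0 else gthth_raw a \<tau> s)"

lemma isCont_gthth_ext_nonzero:
  assumes "\<bar>s0\<bar> < \<tau>0" "s0 \<noteq> 0"
  shows "isCont (\<lambda>p. gthth_ext (fst p) (snd p)) (\<tau>0, s0)"
proof -
  let ?F = "at (\<tau>0, s0)"
  have fs: "(fst \<longlongrightarrow> \<tau>0) ?F" "((\<lambda>p. \<bar>snd p\<bar>) \<longlongrightarrow> \<bar>s0\<bar>) ?F"
    by (auto intro!: tendsto_eq_intros)
  have "((\<lambda>p. (a \<bar>snd p\<bar>)\<^sup>2 * (chi a \<bar>snd p\<bar> (fst p))\<^sup>2) \<longlongrightarrow> (a \<bar>s0\<bar>)\<^sup>2 * (chi a \<bar>s0\<bar> \<tau>0)\<^sup>2) ?F"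
    using assms
    by (intro tendsto_intros tendsto_chi[OF _ _ fs(2,1)] isCont_tendsto_compose[OF isCont_a_abs])
      (auto intro!: tendsto_eq_intros)
  then have "((\<lambda>p. (a \<bar>snd p\<bar>)\<^sup>2 * (chi a \<bar>snd p\<bar> (fst p))\<^sup>2) \<longlongrightarrow> gthth_ext \<tau>0 s0) ?F"
    using assms by (simp add: gthth_ext_def gthth_raw_def aext_def)
  moreover have "eventually (\<lambda>p. 0 < \<bar>snd p\<bar>) ?F"
    using order_tendstoD(1)[OF fs(2), of 0] assms by simp
  then have "eventually (\<lambda>p. (a \<bar>snd p\<bar>)\<^sup>2 * (chi a \<bar>snd p\<bar> (fst p))\<^sup>2 = gthth_ext (fst p) (snd p)) ?F"
    by eventually_elim (simp add: gthth_ext_def gthth_raw_def aext_def)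
  ultimately have "((\<lambda>p. gthth_ext (fst p) (snd p)) \<longlongrightarrow> gthth_ext \<tau>0 s0) ?F"
    by (rule tendsto_cong[THEN iffD1, rotated])
  then show ?thesis by (simp add: isCont_def)
qed

lemma isCont_gthth_ext_zero:
  assumes "0 < \<tau>0"
  shows "isCont (\<lambda>p. gthth_ext (fst p) (snd p)) (\<tau>0, 0)"
proof -
  define m where "m = \<tau>0 / 2"
  have m: "0 < m" "m < \<tau>0" using assms by (auto simp: m_def)
  define \<psi> where "\<psi> u = a u * integral {u..m} (\<lambda>t. 1 / a t)" for u
  define B where "B p = a (fst p) / sqrt ((a (fst p))\<^sup>2 - (a m)\<^sup>2) * \<psi> \<bar>snd p\<bar> + a \<bar>snd p\<bar> * chi a m (fst p)"
    for p :: "real \<times> real"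
  let ?F = "at (\<tau>0, 0::real)"
  have fs: "(fst \<longlongrightarrow> \<tau>0) ?F" "((\<lambda>p. \<bar>snd p\<bar>) \<longlongrightarrow> 0) ?F"
    by (auto intro!: tendsto_eq_intros)
  have "((\<lambda>p. \<psi> \<bar>snd p\<bar>) \<longlongrightarrow> 0) ?F"
    using continuous_within_tendsto_compose'[OF continuous_a_mult_integral_inverse_a[OF m(1)] _ fs(2)]
    by (simp add: \<psi>_def)
  moreover have "((\<lambda>p. a (fst p) / sqrt ((a (fst p))\<^sup>2 - (a m)\<^sup>2))
      \<longlongrightarrow> a \<tau>0 / sqrt ((a \<tau>0)\<^sup>2 - (a m)\<^sup>2)) ?F"
    using a_sq_diff_pos[of m \<tau>0] m assms
    by (intro tendsto_intros isCont_tendsto_compose[OF isCont_a fs(1)]) auto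
  moreover have "(snd \<longlongrightarrow> 0) ?F" by (auto intro!: tendsto_eq_intros)
  then have "((\<lambda>p. a \<bar>snd p\<bar>) \<longlongrightarrow> a \<bar>0\<bar>) ?F"
    by (rule isCont_tendsto_compose[OF isCont_a_abs])
  moreover have "((\<lambda>p. chi a m (fst p)) \<longlongrightarrow> chi a m \<tau>0) ?F"
    using m by (intro tendsto_chi[OF _ _ tendsto_const fs(1)])
  ultimately have "(B \<longlongrightarrow> a \<tau>0 / sqrt ((a \<tau>0)\<^sup>2 - (a m)\<^sup>2) * 0 + a \<bar>0\<bar> * chi a m \<tau>0) ?F"
    unfolding B_def by (intro tendsto_add tendsto_mult)
  then have B: "(B \<longlongrightarrow> 0) ?F" by simp
  have "eventually (\<lambda>p. norm (gthth_ext (fst p) (snd p)) \<le> (B p)\<^sup>2) ?F"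
    using order_tendstoD(1)[OF fs(1) m(2)] order_tendstoD(2)[OF fs(2) m(1)]
  proof eventually_elim
    case (elim p)
    define u where "u = \<bar>snd p\<bar>"
    show ?case
    proof (cases "u = 0")
      case False
      then have "0 < u" by (simp add: u_def)
      have "0 \<le> a u * chi a u (fst p)"
        using \<open>0 < u\<close> elim a_pos by (intro mult_nonneg_nonneg chi_nonneg) (auto simp: u_def less_imp_le)
      moreover have "a u * chi a u (fst p) \<le> a u * (a (fst p) / sqrt ((a (fst p))\<^sup>2 - (a m)\<^sup>2)
          * integral {u..m} (\<lambda>t. 1 / a t) + chi a m (fst p))"
        using elim a_pos[OF \<open>0 < u\<close>] by (intro mult_left_mono chi_le \<open>0 < u\<close>) (auto simp: u_def)
      moreover have "\<dots> = B p" by (simp add: B_def \<psi>_def u_def algebra_simps)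
      ultimately have "0 \<le> a u * chi a u (fst p)" "a u * chi a u (fst p) \<le> B p" by simp_all
      then have "(a u * chi a u (fst p))\<^sup>2 \<le> (B p)\<^sup>2" by (intro power_mono)
      then show ?thesis
        using False by (simp add: gthth_ext_def gthth_raw_def aext_def u_def power_mult_distrib)
    qed (simp add: gthth_ext_def u_def)
  qed
  from Lim_null_comparison[OF this] have "((\<lambda>p. gthth_ext (fst p) (snd p)) \<longlongrightarrow> 0) ?F"
    using tendsto_power[OF B, of 2] by simp
  then show ?thesis by (simp add: isCont_def gthth_ext_def)
qed

lemma continuous_on_gthth_ext: "continuous_on {p. \<bar>snd p\<bar> < fst p} (\<lambda>p. gthth_ext (fst p) (snd p))"
proof (intro continuous_at_imp_continuous_on ballI)
  fix p :: "real \<times> real" assume "p \<in> {p. \<bar>snd p\<bar> < fst p}"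
  then obtain \<tau> s where "p = (\<tau>, s)" "\<bar>s\<bar> < \<tau>" by (cases p) auto
  then show "isCont (\<lambda>p. gthth_ext (fst p) (snd p)) p"
    using isCont_gthth_ext_nonzero[of s \<tau>] isCont_gthth_ext_zero[of \<tau>] by (cases "s = 0") auto
qed

lemma gthth_raw_tendsto_zero:
  assumes "0 < \<tau>"
  shows "(gthth_raw a \<tau> \<longlongrightarrow> 0) (at 0)"
proof -
  have "((\<lambda>s. (\<tau>, s)) \<longlongrightarrow> (\<tau>, 0)) (at (0::real))" by (auto intro!: tendsto_eq_intros)
  from isCont_tendsto_compose[OF isCont_gthth_ext_zero[OF assms] this]
  have "(gthth_ext \<tau> \<longlongrightarrow> 0) (at 0)" by (simp add: gthth_ext_def[abs_def])
  moreover have "eventually (\<lambda>s. gthth_ext \<tau> s = gthth_raw a \<tau> s) (at 0)"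
    by (simp add: gthth_ext_def eventually_at_filter)
  ultimately show ?thesis by (rule tendsto_cong[THEN iffD1, rotated])
qed

lemma g_thth_eq_gthth_ext: "0 < \<tau> \<Longrightarrow> g_thth a \<tau> \<rho> = gthth_ext \<tau> (t0 a \<tau> \<rho>)"
  using tendsto_Lim[OF _ gthth_raw_tendsto_zero] by (simp add: g_thth_def gthth_ext_def Let_def)

lemma continuous_on_g_thth: "continuous_on (D_polar a c d) (\<lambda>(\<tau>, \<rho>, \<theta>, \<phi>). g_thth a \<tau> \<rho>)"
proof -
  let ?D = "D_polar a c d"
  have D: "0 < fst q" "0 < fst (snd q)" "fst (snd q) < 2 * rho_M a (fst q)" if "q \<in> ?D" for q
    using that rho_max_le[of a "fst q"] by (auto simp: D_polar_def)
  have "continuous_on ?D (\<lambda>q. t0 a (fst q) (fst (snd q)))"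
    using D by (intro continuous_on_compose2[OF continuous_on_t0, of _ "\<lambda>q. (fst q, fst (snd q))",
          simplified] continuous_intros) auto
  moreover have "\<bar>t0 a (fst q) (fst (snd q))\<bar> < fst q" if "q \<in> ?D" for q
    using t0_spec(1)[OF D[OF that]] by auto
  ultimately have "continuous_on ?D (\<lambda>q. gthth_ext (fst q) (t0 a (fst q) (fst (snd q))))"
    by (intro continuous_on_compose2[OF continuous_on_gthth_ext,
          of _ "\<lambda>q. (fst q, t0 a (fst q) (fst (snd q)))", simplified] continuous_intros) auto
  then show ?thesis
  proof (rule continuous_on_eq)
    fix q assume "q \<in> ?D"
    then show "gthth_ext (fst q) (t0 a (fst q) (fst (snd q))) = (\<lambda>(\<tau>, \<rho>, \<theta>, \<phi>). g_thth a \<tau> \<rho>) q"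
      using g_thth_eq_gthth_ext[OF D(1)] by (simp add: case_prod_beta)
  qed
qed

lemma continuous_on_g_phph: "continuous_on (D_polar a c d) (\<lambda>(\<tau>, \<rho>, \<theta>, \<phi>). g_phph a \<tau> \<rho> \<theta>)"
proof -
  have "continuous_on (D_polar a c d) (\<lambda>q. (\<lambda>(\<tau>, \<rho>, \<theta>, \<phi>). g_thth a \<tau> \<rho>) q * (sin (fst (snd (snd q))))\<^sup>2)"
    by (intro continuous_intros continuous_on_g_thth)
  then show ?thesis by (rule continuous_on_eq) (auto simp: g_phph_def)
qed

end

theorem theorem7p3:
  fixes a :: "real \<Rightarrow> real" and c d :: real
  assumes "regular_scale_factor a"
  shows "(\<forall>\<tau>>0. \<exists>L. (gthth_raw a \<tau> \<longlongrightarrow> L) (at 0))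
    \<and> continuous_on (D_polar a c d) (\<lambda>(\<tau>, \<rho>, \<theta>, \<phi>). g_thth a \<tau> \<rho>)
    \<and> continuous_on (D_polar a c d) (\<lambda>(\<tau>, \<rho>, \<theta>, \<phi>). g_phph a \<tau> \<rho> \<theta>)"
proof -
  interpret regular_scale a using assms by (rule regular_scale.intro)
  show ?thesis using gthth_raw_tendsto_zero continuous_on_g_thth continuous_on_g_phph by blast
qed

end
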